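(* Let $\mathcal A=\{A_s\}_{s\in\mathbf S}\subset CQ(\mathbf X,\mathcal H)$ be an AVcqC ($\mathbf S$ finite) with $C_{A,d}(\mathcal A)>0$, and let $0<R<C_{A,d}(\mathcal A)$. For every sequence of $(l,M_l)$ codes $(x_i^l,D_i^l)_{i=1}^{M_l}$ with $\liminf_l\frac1l\log M_l\ge R$ and $\lim_{l\to\infty}\min_{i\in[M_l]}\min_{s^l\in\mathbf S^l}\mathrm{tr}(A_{s^l}(x_i^l)D_i^l)=1$, there is another sequence of $(l,M_l)$ codes $(x_i^l,\tilde D_i^l)_{i=1}^{M_l}$ with the same codewords and modified decoding operators such that (1) $\liminf_l\frac1l\log M_l\ge R$; (2) $\lim_{l\to\infty}\min_{i\in[M_l]}\min_{s^l\in\mathbf S^l}\mathrm{tr}(A_{s^l}(x_i^l)\tilde D_i^l)=1$; (3) for all $l\in\mathbb N$, $i\in[M_l]$ and $s^l\in\mathbf S^l$: $\mathrm{tr}(A_{s^l}(x_i^l)\tilde D_i^l)<1$.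
   Context: $\mathbf X$ finite, $\mathcal H$ finite-dimensional, $CQ(\mathbf X,\mathcal H)$ the maps $\mathbf X\to\mathcal S(\mathcal H)$; $A_{s^l}(x^l)=\bigotimes_iA_{s_i}(x_i)$. An $(l,M)$ code is $(x_i^l,D_i^l)_{i=1}^M$, $x_i^l\in\mathbf X^l$, $D_i^l\ge0$, $\sum_iD_i^l\le\mathbf 1$. $C_{A,d}(\mathcal A)$ is the supremum of rates $R'$ achievable by such codes with $\liminf_l\frac1l\log M_l\ge R'$ and $\lim_l\max_{s^l}\max_i\mathrm{tr}(A_{s^l}(x_i^l)(\mathbf 1-D_i^l))=0$ (maximal error criterion). *)

theory Defs
  imports "HOL-Analysis.Analysis"
begin

text \<open>Finite-dimensional Hilbert space H = C^d with computational basis indexed by {..<d}.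
  The l-fold tensor power H^{\<otimes>l} has basis indexed by the words of length l over {..<d};
  operators on it are represented by their matrices, i.e. functions on pairs of such words.\<close>

type_synonym op = "nat list \<Rightarrow> nat list \<Rightarrow> complex"

definition basis :: "nat \<Rightarrow> nat \<Rightarrow> nat list set" where
  "basis d l = {w. length w = l \<and> set w \<subseteq> {..<d}}"

definition idop :: op where
  "idop a b = (if a = b then 1 else 0)"

definition tr_prod :: "nat \<Rightarrow> nat \<Rightarrow> op \<Rightarrow> op \<Rightarrow> complex" where
  "tr_prod d l K L = (\<Sum>a\<in>basis d l. \<Sum>b\<in>basis d l. K a b * L b a)"

definition trace_op :: "nat \<Rightarrow> nat \<Rightarrow> op \<Rightarrow> complex" where
  "trace_op d l K = (\<Sum>a\<in>basis d l. K a a)"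

text \<open>Positive semidefinite (over C this includes being Hermitian).\<close>
definition psd :: "nat \<Rightarrow> nat \<Rightarrow> op \<Rightarrow> bool" where
  "psd d l K \<longleftrightarrow> (\<forall>v :: nat list \<Rightarrow> complex.
     (let q = (\<Sum>a\<in>basis d l. \<Sum>b\<in>basis d l. cnj (v a) * K a b * v b) in Im q = 0 \<and> 0 \<le> Re q))"

definition density :: "nat \<Rightarrow> nat \<Rightarrow> op \<Rightarrow> bool" where
  "density d l K \<longleftrightarrow> psd d l K \<and> trace_op d l K = 1"

text \<open>A cq-channel X \<rightarrow> S(H): a state (operator on H = H^{\<otimes>1}) for every input letter.\<close>
definition is_AVcqC :: "nat \<Rightarrow> ('s \<Rightarrow> 'x \<Rightarrow> op) \<Rightarrow> bool" where
  "is_AVcqC d A \<longleftrightarrow> 1 \<le> d \<and> (\<forall>s x. density d 1 (A s x))"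

definition tensor_ch :: "('s \<Rightarrow> 'x \<Rightarrow> op) \<Rightarrow> 's list \<Rightarrow> 'x list \<Rightarrow> op" where
  "tensor_ch A ss xs = (\<lambda>a b. \<Prod>k<length xs. A (ss ! k) (xs ! k) [a ! k] [b ! k])"

definition is_code :: "nat \<Rightarrow> nat \<Rightarrow> nat \<Rightarrow> (nat \<Rightarrow> 'x list) \<Rightarrow> (nat \<Rightarrow> op) \<Rightarrow> bool" where
  "is_code d l M x D \<longleftrightarrow> 1 \<le> M \<and> (\<forall>i<M. length (x i) = l \<and> psd d l (D i)) \<and>
     psd d l (\<lambda>a b. idop a b - (\<Sum>i<M. D i a b))"

definition max_err :: "nat \<Rightarrow> ('s \<Rightarrow> 'x \<Rightarrow> op) \<Rightarrow> nat \<Rightarrow> nat \<Rightarrow> (nat \<Rightarrow> 'x list) \<Rightarrow> (nat \<Rightarrow> op) \<Rightarrow> real" where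
  "max_err d A l M x D = Max {Re (tr_prod d l (tensor_ch A ss (x i)) (\<lambda>a b. idop a b - D i a b)) | i ss.
      i < M \<and> length ss = l}"

definition min_succ :: "nat \<Rightarrow> ('s \<Rightarrow> 'x \<Rightarrow> op) \<Rightarrow> nat \<Rightarrow> nat \<Rightarrow> (nat \<Rightarrow> 'x list) \<Rightarrow> (nat \<Rightarrow> op) \<Rightarrow> real" where
  "min_succ d A l M x D = Min {Re (tr_prod d l (tensor_ch A ss (x i)) (D i)) | i ss.
      i < M \<and> length ss = l}"

definition achievable :: "nat \<Rightarrow> ('s \<Rightarrow> 'x \<Rightarrow> op) \<Rightarrow> real \<Rightarrow> bool" where
  "achievable d A R' \<longleftrightarrow> (\<exists>(M :: nat \<Rightarrow> nat) (x :: nat \<Rightarrow> nat \<Rightarrow> 'x list) (D :: nat \<Rightarrow> nat \<Rightarrow> op).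
     (\<forall>l. is_code d l (M l) (x l) (D l)) \<and>
     ereal R' \<le> liminf (\<lambda>l. ereal (log 2 (real (M l)) / real l)) \<and>
     (\<lambda>l. max_err d A l (M l) (x l) (D l)) \<longlonglongrightarrow> 0)"

definition C_Ad :: "nat \<Rightarrow> ('s \<Rightarrow> 'x \<Rightarrow> op) \<Rightarrow> ereal" where
  "C_Ad d A = Sup {ereal R' | R'. achievable d A R'}"

end

theory Submission
  imports Defs
begin

text \<open>Multiply every decoding operator by a factor \<open>c\<^sub>l < 1\<close> with \<open>c\<^sub>l \<rightarrow> 1\<close>. This keeps a
  code a code, since \<open>1 - c\<^sub>l \<Sum>D\<^sub>i = (1 - c\<^sub>l) 1 + c\<^sub>l (1 - \<Sum>D\<^sub>i)\<close>, and it multiplies the minimal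
  success probability by \<open>c\<^sub>l\<close>, so that the limit is still 1. The new success probabilities are
  strictly below 1 because the old ones are at most 1, which follows from \<open>tr(\<rho> P) \<ge> 0\<close> for a
  product state \<open>\<rho>\<close> and a positive semidefinite \<open>P\<close>. For this, write each single-letter state,
  and hence \<open>\<rho>\<close>, as a Gram matrix \<open>\<Sum>\<^sub>f f f\<^sup>*\<close>; then \<open>tr(\<rho> P) = \<Sum>\<^sub>f f\<^sup>* P f \<ge> 0\<close>. The Gram
  decomposition is obtained by induction on the index set, peeling off the Schur complement of
  one diagonal entry.\<close>

definition qform :: "'i set \<Rightarrow> ('i \<Rightarrow> 'i \<Rightarrow> complex) \<Rightarrow> ('i \<Rightarrow> complex) \<Rightarrow> complex" where
  "qform S K v = (\<Sum>a\<in>S. \<Sum>b\<in>S. cnj (v a) * K a b * v b)"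

definition psd_on :: "'i set \<Rightarrow> ('i \<Rightarrow> 'i \<Rightarrow> complex) \<Rightarrow> bool" where
  "psd_on S K \<longleftrightarrow> (\<forall>v. Im (qform S K v) = 0 \<and> 0 \<le> Re (qform S K v))"

definition gram :: "('i \<Rightarrow> complex) list \<Rightarrow> 'i \<Rightarrow> 'i \<Rightarrow> complex" where
  "gram F a b = (\<Sum>f\<leftarrow>F. f a * cnj (f b))"

lemma psd_iff_psd_on: "psd d l K = psd_on (basis d l) K"
  unfolding psd_def psd_on_def qform_def Let_def by simp

subsection \<open>Gram decomposition of positive semidefinite matrices\<close>

lemma qform_eq_on_support:
  assumes "finite S" "T \<subseteq> S" "\<forall>c\<in>S-T. v c = 0"
  shows "qform S K v = qform T K v"
proof -
  have "qform S K v = (\<Sum>a\<in>T. \<Sum>b\<in>S. cnj (v a) * K a b * v b)"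
    unfolding qform_def using assms by (intro sum.mono_neutral_right) auto
  also have "\<dots> = qform T K v" unfolding qform_def
    using assms by (intro sum.cong refl sum.mono_neutral_right) auto
  finally show ?thesis .
qed

lemma qform_single:
  assumes "finite S" "a \<in> S"
  shows "qform S K (\<lambda>c. if c = a then 1 else 0) = K a a"
  using qform_eq_on_support[of S "{a}" "\<lambda>c. if c = a then 1 else 0" K] assms
  by (simp add: qform_def)

lemma qform_two_points:
  assumes "finite S" "a \<in> S" "b \<in> S" "a \<noteq> b"
  shows "qform S K (\<lambda>c. if c = a then 1 else if c = b then t else 0)
      = K a a + K a b * t + cnj t * K b a + cnj t * K b b * t"
  using qform_eq_on_support[of S "{a, b}" "\<lambda>c. if c = a then 1 else if c = b then t else 0" K]
    assms
  by (simp add: qform_def)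

lemma qform_insert:
  assumes "finite S" "s \<notin> S"
  shows "qform (insert s S) K v = cnj (v s) * K s s * v s + cnj (v s) * (\<Sum>b\<in>S. K s b * v b)
     + (\<Sum>a\<in>S. cnj (v a) * K a s) * v s + qform S K v"
  unfolding qform_def using assms
  by (simp add: sum.distrib sum_distrib_left sum_distrib_right algebra_simps)

lemma psd_on_diag:
  assumes "finite S" "psd_on S K" "a \<in> S"
  shows "Im (K a a) = 0" "0 \<le> Re (K a a)"
  using assms(2) qform_single[OF assms(1,3), of K] unfolding psd_on_def by metis+

lemma psd_on_hermitian:
  assumes "finite S" "psd_on S K" "a \<in> S" "b \<in> S"
  shows "K b a = cnj (K a b)"
proof (cases "a = b")
  case True
  then show ?thesis using psd_on_diag[OF assms(1,2,3)] by (simp add: complex_eq_iff)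
next
  case False
  have real_diag: "Im (K a a) = 0" "Im (K b b) = 0"
    using psd_on_diag(1)[OF assms(1,2,3)] psd_on_diag(1)[OF assms(1,2,4)] by auto
  have "Im (qform S K (\<lambda>c. if c = a then 1 else if c = b then 1 else 0)) = 0"
    using assms unfolding psd_on_def by blast
  hence "Im (K a b) + Im (K b a) = 0"
    using qform_two_points[OF assms(1,3,4) False, of K 1] real_diag by simp
  moreover have "Im (qform S K (\<lambda>c. if c = a then 1 else if c = b then \<i> else 0)) = 0"
    using assms unfolding psd_on_def by blast
  hence "Re (K a b) - Re (K b a) = 0"
    using qform_two_points[OF assms(1,3,4) False, of K \<i>] real_diag by simp
  ultimately show ?thesis by (simp add: complex_eq_iff)
qed

lemma psd_on_zero_diag_imp_zero_col:
  assumes "finite S" "psd_on S K" "a \<in> S" "c \<in> S" "K a a = 0"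
  shows "K c a = 0"
proof (rule ccontr)
  assume nz: "K c a \<noteq> 0"
  hence "c \<noteq> a" using assms by auto
  define n where "n = (cmod (K c a))\<^sup>2"
  have n: "n > 0" using nz n_def by simp
  define r where "r = (Re (K c c) + 1) / (2 * n)"
  define t where "t = - of_real r * cnj (K c a)"
  \<comment> \<open>at \<open>e\<^sub>c + t e\<^sub>a\<close> the form has real part \<open>Re (K c c) - 2 r |K c a|\<^sup>2 = -1\<close>\<close>
  have "0 \<le> Re (qform S K (\<lambda>v. if v = c then 1 else if v = a then t else 0))"
    using assms unfolding psd_on_def by blast
  also have "qform S K (\<lambda>v. if v = c then 1 else if v = a then t else 0)
      = K c c + K c a * t + cnj t * K a c + cnj t * K a a * t"
    using qform_two_points[OF assms(1,4,3) \<open>c \<noteq> a\<close>] .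
  also have "\<dots> = K c c - 2 * of_real r * (K c a * cnj (K c a))"
    unfolding t_def psd_on_hermitian[OF assms(1,2,4,3)] using assms(5)
    by (simp add: algebra_simps)
  also have "K c a * cnj (K c a) = of_real n"
    unfolding n_def by (metis complex_norm_square)
  finally have "0 \<le> Re (K c c) - 2 * r * n" by simp
  moreover have "2 * r * n = Re (K c c) + 1" unfolding r_def using n by simp
  ultimately show False by simp
qed

definition pivot_vec :: "('i \<Rightarrow> 'i \<Rightarrow> complex) \<Rightarrow> 'i \<Rightarrow> 'i \<Rightarrow> complex" where
  "pivot_vec K s c = (if Re (K s s) = 0 then 0 else K c s / of_real (sqrt (Re (K s s))))"

lemma qform_Schur_complement:
  assumes "finite S" "s \<notin> S" "psd_on (insert s S) K"
  defines "u \<equiv> pivot_vec K s"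
  shows "\<exists>t. qform (insert s S) K (v(s := t)) = qform S (\<lambda>a b. K a b - u a * cnj (u b)) v"
proof -
  define k where "k = Re (K s s)"
  have fin: "finite (insert s S)" using assms by simp
  have kk: "K s s = of_real k" using psd_on_diag[OF fin assms(3)] unfolding k_def
    by (simp add: complex_eq_iff)
  have k0: "k \<ge> 0" using psd_on_diag[OF fin assms(3)] unfolding k_def by simp
  define w where "w = (\<Sum>b\<in>S. K s b * v b)"
  \<comment> \<open>\<open>t\<close> minimises the form in the coordinate \<open>s\<close>\<close>
  define t where "t = (if k = 0 then 0 else - w / of_real k)"
  define v' where "v' = v(s := t)"
  have v'_on_S: "\<And>a. a \<in> S \<Longrightarrow> v' a = v a" unfolding v'_def using assms(2) by auto
  have qform_S: "qform S K v' = qform S K v"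
    unfolding qform_def by (intro sum.cong refl) (simp add: v'_on_S)
  have row: "(\<Sum>b\<in>S. K s b * v' b) = w"
    unfolding w_def by (intro sum.cong refl) (simp add: v'_on_S)
  have "(\<Sum>a\<in>S. cnj (v' a) * K a s) = (\<Sum>a\<in>S. cnj (K s a * v a))"
    using psd_on_hermitian[OF fin assms(3), of s] by (intro sum.cong refl) (simp add: v'_on_S)
  then have col: "(\<Sum>a\<in>S. cnj (v' a) * K a s) = cnj w" unfolding w_def by simp
  have qform_Schur: "qform S (\<lambda>a b. K a b - u a * cnj (u b)) v
     = qform S K v - (\<Sum>a\<in>S. cnj (v a) * u a) * (\<Sum>b\<in>S. cnj (u b) * v b)"
    unfolding qform_def by (simp add: sum_subtractf sum_product algebra_simps)
  have "qform (insert s S) K v' = qform S (\<lambda>a b. K a b - u a * cnj (u b)) v"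
  proof (cases "k = 0")
    case True
    then show ?thesis unfolding qform_Schur qform_insert[OF assms(1,2)] qform_S row col
      by (simp add: v'_def t_def u_def pivot_vec_def k_def)
  next
    case False
    hence kp: "k > 0" using k0 by simp
    have sqrt_sq: "of_real (sqrt k) * of_real (sqrt k) = (of_real k :: complex)"
      using k0 by (simp flip: of_real_mult)
    have u_left: "(\<Sum>a\<in>S. cnj (v a) * u a) = cnj w / of_real (sqrt k)"
      using col False unfolding u_def pivot_vec_def k_def[symmetric]
      by (simp add: v'_on_S flip: sum_divide_distrib)
    have "(\<Sum>b\<in>S. cnj (u b) * v b) = (\<Sum>b\<in>S. K s b * v b / of_real (sqrt k))"
      using False psd_on_hermitian[OF fin assms(3), of _ s] unfolding u_def pivot_vec_def k_def[symmetric]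
      by (intro sum.cong refl) simp
    hence u_right: "(\<Sum>b\<in>S. cnj (u b) * v b) = w / of_real (sqrt k)"
      unfolding w_def by (simp add: sum_divide_distrib)
    have "qform (insert s S) K v' = cnj t * of_real k * t + cnj t * w + cnj w * t + qform S K v"
      unfolding qform_insert[OF assms(1,2)] qform_S row col kk by (simp add: v'_def)
    also have "\<dots> = qform S K v - cnj w * w / of_real k"
      using kp unfolding t_def by (simp add: field_simps)
    also have "\<dots> = qform S (\<lambda>a b. K a b - u a * cnj (u b)) v"
      unfolding qform_Schur u_left u_right using sqrt_sq kp by (simp add: field_simps)
    finally show ?thesis .
  qed
  then show ?thesis unfolding v'_def by blast
qed

lemma psd_on_Schur_complement:
  assumes "finite S" "s \<notin> S" "psd_on (insert s S) K"
  shows "psd_on S (\<lambda>a b. K a b - pivot_vec K s a * cnj (pivot_vec K s b))"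
  unfolding psd_on_def
proof
  fix v
  obtain t where "qform (insert s S) K (v(s := t))
      = qform S (\<lambda>a b. K a b - pivot_vec K s a * cnj (pivot_vec K s b)) v"
    using qform_Schur_complement[OF assms] by blast
  then show "Im (qform S (\<lambda>a b. K a b - pivot_vec K s a * cnj (pivot_vec K s b)) v) = 0 \<and>
      0 \<le> Re (qform S (\<lambda>a b. K a b - pivot_vec K s a * cnj (pivot_vec K s b)) v)"
    using assms(3) unfolding psd_on_def by metis
qed

lemma psd_on_pivot_vec:
  assumes "finite S" "psd_on S K" "s \<in> S" "a \<in> S" "b \<in> S" "a = s \<or> b = s"
  shows "K a b = pivot_vec K s a * cnj (pivot_vec K s b)"
proof (cases "Re (K s s) = 0")
  case True
  have kk: "K s s = 0" using True psd_on_diag(1)[OF assms(1-3)] by (simp add: complex_eq_iff)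
  have col: "K c s = 0" if "c \<in> S" for c
    using psd_on_zero_diag_imp_zero_col[OF assms(1,2,3) that kk] .
  have row: "K s c = 0" if "c \<in> S" for c
    using psd_on_hermitian[OF assms(1,2) that assms(3)] col[OF that] by simp
  show ?thesis using assms(4-6) col row True unfolding pivot_vec_def by auto
next
  case False
  define k where "k = Re (K s s)"
  have kp: "k > 0" using False psd_on_diag(2)[OF assms(1-3)] unfolding k_def by simp
  have kk: "K s s = of_real k" using psd_on_diag(1)[OF assms(1-3)] unfolding k_def
    by (simp add: complex_eq_iff)
  have sqrt_sq: "of_real (sqrt k) * of_real (sqrt k) = (of_real k :: complex)"
    using kp by (simp flip: of_real_mult)
  have us: "pivot_vec K s s = of_real (sqrt k)" unfolding pivot_vec_def kk using kp
    by (simp add: field_simps flip: sqrt_sq)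
  have "K s b = cnj (K b s)" using psd_on_hermitian[OF assms(1,2,5,3)] by simp
  then show ?thesis using assms(6) us False sqrt_sq kp unfolding pivot_vec_def k_def[symmetric]
    by (auto simp: field_simps)
qed

lemma psd_on_gram_decomposition:
  assumes "finite S" "psd_on S K"
  shows "\<exists>F. \<forall>a\<in>S. \<forall>b\<in>S. K a b = gram F a b"
  using assms
proof (induction S arbitrary: K rule: finite_induct)
  case empty
  then show ?case by auto
next
  case (insert s S)
  let ?u = "pivot_vec K s"
  obtain F where F: "\<forall>a\<in>S. \<forall>b\<in>S. K a b - ?u a * cnj (?u b) = gram F a b"
    using insert(3) psd_on_Schur_complement[OF insert(1,2,4)] by blast
  show ?case
  proof (intro exI[of _ "?u # map (\<lambda>f c. if c = s then 0 else f c) F"] ballI)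
    fix a b assume ab: "a \<in> insert s S" "b \<in> insert s S"
    show "K a b = gram (?u # map (\<lambda>f c. if c = s then 0 else f c) F) a b"
    proof (cases "a = s \<or> b = s")
      case True
      then show ?thesis using psd_on_pivot_vec[OF _ insert(4) _ ab True] insert(1)
        by (auto simp: gram_def o_def)
    next
      case False
      then have "a \<in> S" "b \<in> S" using ab by auto
      then show ?thesis using F False by (simp add: gram_def o_def algebra_simps)
    qed
  qed
qed

lemma basis_0: "basis d 0 = {[]}"
  unfolding basis_def by auto

lemma basis_Suc: "basis d (Suc l) = (\<lambda>(n, w). n # w) ` ({..<d} \<times> basis d l)"
  unfolding basis_def by (auto simp: length_Suc_conv image_iff)

lemma basis_1: "basis d 1 = (\<lambda>n. [n]) ` {..<d}"
  using basis_Suc[of d 0] unfolding basis_0 by auto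

lemma finite_basis: "finite (basis d l)"
  by (induction l) (simp_all add: basis_Suc basis_0)

lemma tensor_ch_Nil: "tensor_ch A ss [] a b = 1"
  unfolding tensor_ch_def by simp

lemma tensor_ch_Cons:
  "tensor_ch A (s # ss) (x # xs) (n # a) (m # b) = A s x [n] [m] * tensor_ch A ss xs a b"
  unfolding tensor_ch_def length_Cons prod.lessThan_Suc_shift by simp

lemma tensor_ch_gram:
  assumes "is_AVcqC d A" "length ss = length xs"
  shows "\<exists>F. \<forall>a\<in>basis d (length xs). \<forall>b\<in>basis d (length xs). tensor_ch A ss xs a b = gram F a b"
  using assms(2)
proof (induction xs arbitrary: ss)
  case Nil
  show ?case by (intro exI[of _ "[\<lambda>_. 1]"]) (simp add: tensor_ch_Nil gram_def)
next
  case (Cons x xs)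
  then obtain s ss' where ss: "ss = s # ss'" "length ss' = length xs" by (cases ss) auto
  obtain F where F: "\<forall>a\<in>basis d (length xs). \<forall>b\<in>basis d (length xs).
     tensor_ch A ss' xs a b = gram F a b" using Cons(1)[OF ss(2)] by blast
  have "psd_on (basis d 1) (A s x)"
    using assms(1) unfolding is_AVcqC_def density_def psd_iff_psd_on by blast
  then obtain G where G: "\<forall>a\<in>basis d 1. \<forall>b\<in>basis d 1. A s x a b = gram G a b"
    using psd_on_gram_decomposition finite_basis by blast
  \<comment> \<open>the Gram vectors of a tensor product are the tensor products of the Gram vectors\<close>
  define H where "H = concat (map (\<lambda>g. map (\<lambda>f c. g [hd c] * f (tl c)) F) G)"
  show ?case
  proof (intro exI[of _ H] ballI)
    fix a b assume "a \<in> basis d (length (x # xs))" "b \<in> basis d (length (x # xs))"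
    then obtain n a' m b' where nm: "a = n # a'" "b = m # b'" "n < d" "m < d"
      "a' \<in> basis d (length xs)" "b' \<in> basis d (length xs)"
      by (auto simp: basis_Suc)
    have "[n] \<in> basis d 1" "[m] \<in> basis d 1" using nm by (auto simp: basis_def)
    then have "tensor_ch A ss (x # xs) a b = gram G [n] [m] * gram F a' b'"
      unfolding nm ss tensor_ch_Cons using G F nm by simp
    also have "\<dots> = (\<Sum>g\<leftarrow>G. \<Sum>f\<leftarrow>F. (g [n] * cnj (g [m])) * (f a' * cnj (f b')))"
      unfolding gram_def sum_list_mult_const[symmetric] by (simp only: sum_list_const_mult)
    also have "\<dots> = (\<Sum>g\<leftarrow>G. \<Sum>f\<leftarrow>F. (g [n] * f a') * cnj (g [m] * f b'))"
      by (simp add: algebra_simps)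
    also have "\<dots> = gram H a b"
      unfolding gram_def H_def map_concat by (induction G) (simp_all add: nm o_def)
    finally show "tensor_ch A ss (x # xs) a b = gram H a b" .
  qed
qed

lemma trace_tensor_ch:
  assumes "is_AVcqC d A" "length ss = length xs"
  shows "(\<Sum>a\<in>basis d (length xs). tensor_ch A ss xs a a) = 1"
  using assms(2)
proof (induction xs arbitrary: ss)
  case Nil
  show ?case by (simp add: basis_0 tensor_ch_Nil)
next
  case (Cons x xs)
  then obtain s ss' where ss: "ss = s # ss'" "length ss' = length xs" by (cases ss) auto
  have "trace_op d 1 (A s x) = 1" using assms(1) unfolding is_AVcqC_def density_def by blast
  moreover have "trace_op d 1 (A s x) = (\<Sum>n<d. A s x [n] [n])"
    unfolding trace_op_def basis_1 by (subst sum.reindex) (auto simp: inj_on_def)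
  ultimately have tr1: "(\<Sum>n<d. A s x [n] [n]) = 1" by simp
  have inj: "inj_on (\<lambda>(n, w). n # w) ({..<d} \<times> basis d (length xs))"
    by (auto simp: inj_on_def)
  have "(\<Sum>a\<in>basis d (length (x # xs)). tensor_ch A ss (x # xs) a a)
      = (\<Sum>(n, w)\<in>{..<d} \<times> basis d (length xs). A s x [n] [n] * tensor_ch A ss' xs w w)"
    unfolding length_Cons basis_Suc
    by (subst sum.reindex[OF inj]) (simp add: ss tensor_ch_Cons case_prod_beta)
  also have "\<dots> = (\<Sum>n<d. A s x [n] [n]) * (\<Sum>w\<in>basis d (length xs). tensor_ch A ss' xs w w)"
    by (simp add: sum_product sum.cartesian_product)
  also have "\<dots> = 1" using tr1 Cons(1)[OF ss(2)] by simp
  finally show ?case .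
qed

lemma sum_sum_list_commute: "(\<Sum>a\<in>S. \<Sum>f\<leftarrow>F. g f a) = (\<Sum>f\<leftarrow>F. \<Sum>a\<in>S. g f a)"
  by (induction F) (simp_all add: sum.distrib)

lemma tr_prod_gram: "tr_prod d l (gram F) P = (\<Sum>f\<leftarrow>F. qform (basis d l) P f)"
proof -
  have "tr_prod d l (gram F) P = (\<Sum>a\<in>basis d l. \<Sum>b\<in>basis d l. \<Sum>f\<leftarrow>F. f a * cnj (f b) * P b a)"
    unfolding tr_prod_def gram_def sum_list_mult_const[symmetric] ..
  also have "\<dots> = (\<Sum>f\<leftarrow>F. qform (basis d l) P f)"
    unfolding qform_def sum_sum_list_commute by (subst sum.swap) (simp add: mult_ac)
  finally show ?thesis .
qed

lemma tr_prod_tensor_ch_nonneg: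
  assumes "is_AVcqC d A" "length ss = l" "length xs = l" "psd d l P"
  shows "0 \<le> Re (tr_prod d l (tensor_ch A ss xs) P)"
proof -
  obtain F where F: "\<forall>a\<in>basis d l. \<forall>b\<in>basis d l. tensor_ch A ss xs a b = gram F a b"
    using tensor_ch_gram[OF assms(1), of ss xs] assms(2,3) by auto
  then have "tr_prod d l (tensor_ch A ss xs) P = (\<Sum>f\<leftarrow>F. qform (basis d l) P f)"
    unfolding tr_prod_gram[symmetric] tr_prod_def by (intro sum.cong refl) simp
  moreover have "0 \<le> Re (\<Sum>f\<leftarrow>F. qform (basis d l) P f)"
    using assms(4) unfolding psd_iff_psd_on psd_on_def by (induction F) auto
  ultimately show ?thesis by simp
qed

lemma tr_prod_idop_minus_sum:
  assumes "finite J"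
  shows "tr_prod d l T (\<lambda>a b. idop a b - (\<Sum>j\<in>J. D j a b))
     = (\<Sum>a\<in>basis d l. T a a) - (\<Sum>j\<in>J. tr_prod d l T (D j))"
proof -
  have "tr_prod d l T (\<lambda>a b. idop a b - (\<Sum>j\<in>J. D j a b))
     = (\<Sum>a\<in>basis d l. \<Sum>b\<in>basis d l. T a b * idop b a)
       - (\<Sum>a\<in>basis d l. \<Sum>b\<in>basis d l. \<Sum>j\<in>J. T a b * D j b a)"
    unfolding tr_prod_def by (simp add: right_diff_distrib sum_subtractf sum_distrib_left)
  also have "(\<Sum>a\<in>basis d l. \<Sum>b\<in>basis d l. T a b * idop b a) = (\<Sum>a\<in>basis d l. T a a)"
    unfolding idop_def using finite_basis[of d l] by (simp add: if_distrib cong: if_cong)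
  also have "(\<Sum>a\<in>basis d l. \<Sum>b\<in>basis d l. \<Sum>j\<in>J. T a b * D j b a) = (\<Sum>j\<in>J. tr_prod d l T (D j))"
    unfolding tr_prod_def by (simp add: sum.swap[of _ J])
  finally show ?thesis .
qed

lemma code_success_le_1:
  assumes "is_AVcqC d A" "is_code d l M x D" "i < M" "length ss = l"
  shows "Re (tr_prod d l (tensor_ch A ss (x i)) (D i)) \<le> 1"
proof -
  let ?T = "tensor_ch A ss (x i)"
  have lx: "length (x i) = l" using assms unfolding is_code_def by blast
  have succ_nonneg: "0 \<le> Re (tr_prod d l ?T (D j))" if "j < M" for j
    using assms that lx tr_prod_tensor_ch_nonneg[OF assms(1,4) lx] unfolding is_code_def by blast
  have "0 \<le> Re (tr_prod d l ?T (\<lambda>a b. idop a b - (\<Sum>j<M. D j a b)))"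
    using assms lx tr_prod_tensor_ch_nonneg[OF assms(1,4) lx] unfolding is_code_def by blast
  also have "tr_prod d l ?T (\<lambda>a b. idop a b - (\<Sum>j<M. D j a b)) = 1 - (\<Sum>j<M. tr_prod d l ?T (D j))"
    unfolding tr_prod_idop_minus_sum[OF finite_lessThan]
    using trace_tensor_ch[OF assms(1), of ss "x i"] lx assms(4) by simp
  finally have "(\<Sum>j<M. Re (tr_prod d l ?T (D j))) \<le> 1" by (simp add: Re_sum)
  moreover have "Re (tr_prod d l ?T (D i)) \<le> (\<Sum>j<M. Re (tr_prod d l ?T (D j)))"
    using succ_nonneg assms(3) by (intro member_le_sum) auto
  ultimately show ?thesis by simp
qed

lemma tr_prod_scale: "tr_prod d l T (\<lambda>a b. of_real c * D a b) = of_real c * tr_prod d l T D"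
  unfolding tr_prod_def by (simp add: sum_distrib_left algebra_simps)

lemma psd_on_scale:
  assumes "psd_on S K" "0 \<le> c"
  shows "psd_on S (\<lambda>a b. of_real c * K a b)"
proof -
  have "qform S (\<lambda>a b. of_real c * K a b) v = of_real c * qform S K v" for v
    unfolding qform_def by (simp add: sum_distrib_left algebra_simps)
  then show ?thesis using assms unfolding psd_on_def by simp
qed

lemma psd_on_idop:
  assumes "finite S"
  shows "psd_on S idop"
  unfolding psd_on_def
proof
  fix v :: "_ \<Rightarrow> complex"
  have "qform S idop v = (\<Sum>a\<in>S. \<Sum>b\<in>S. if b = a then cnj (v a) * v b else 0)"
    unfolding qform_def idop_def by (intro sum.cong refl) auto
  also have "\<dots> = (\<Sum>a\<in>S. of_real ((cmod (v a))\<^sup>2))"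
    using assms by (simp add: complex_norm_square mult.commute del: of_real_power)
  finally show "Im (qform S idop v) = 0 \<and> 0 \<le> Re (qform S idop v)"
    by (simp add: sum_nonneg)
qed
lemma is_code_scale:
  assumes "is_code d l M x D" "0 \<le> c" "c \<le> 1"
  shows "is_code d l M x (\<lambda>i a b. of_real c * D i a b)"
proof -
  let ?B = "basis d l"
  have "psd_on ?B (\<lambda>a b. idop a b - (\<Sum>i<M. of_real c * D i a b))"
    unfolding psd_on_def
  proof
    fix v :: "_ \<Rightarrow> complex"
    have "qform ?B (\<lambda>a b. idop a b - (\<Sum>i<M. of_real c * D i a b)) v
       = of_real (1 - c) * qform ?B idop v + of_real c * qform ?B (\<lambda>a b. idop a b - (\<Sum>i<M. D i a b)) v"
      unfolding qform_def by (simp add: sum_distrib_left algebra_simps sum.distrib sum_subtractf)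
    moreover have "Im (qform ?B (\<lambda>a b. idop a b - (\<Sum>i<M. D i a b)) v) = 0 \<and>
          0 \<le> Re (qform ?B (\<lambda>a b. idop a b - (\<Sum>i<M. D i a b)) v)"
      using assms(1) unfolding is_code_def psd_iff_psd_on psd_on_def by blast
    moreover have "Im (qform ?B idop v) = 0" "0 \<le> Re (qform ?B idop v)"
      using psd_on_idop[OF finite_basis] unfolding psd_on_def by blast+
    ultimately show "Im (qform ?B (\<lambda>a b. idop a b - (\<Sum>i<M. of_real c * D i a b)) v) = 0 \<and>
          0 \<le> Re (qform ?B (\<lambda>a b. idop a b - (\<Sum>i<M. of_real c * D i a b)) v)"
      using assms(2,3) by simp
  qed
  moreover have "psd_on ?B (\<lambda>a b. of_real c * D i a b)" if "i < M" for i
    using assms(1,2) that psd_on_scale unfolding is_code_def psd_iff_psd_on by blast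
  ultimately show ?thesis using assms(1) unfolding is_code_def psd_iff_psd_on by auto
qed

lemma min_succ_scale:
  fixes A :: "'s::finite \<Rightarrow> 'x \<Rightarrow> op"
  assumes "is_code d l M x D" "0 \<le> c"
  shows "min_succ d A l M x (\<lambda>i a b. of_real c * D i a b) = c * min_succ d A l M x D"
proof -
  define S where "S = {Re (tr_prod d l (tensor_ch A ss (x i)) (D i)) | i ss. i < M \<and> length ss = l}"
  have "S = (\<lambda>(i, ss). Re (tr_prod d l (tensor_ch A ss (x i)) (D i))) ` ({..<M} \<times> {ss. length ss = l})"
    unfolding S_def by auto
  moreover have "finite {ss :: 's list. length ss = l}"
    using finite_lists_length_eq[of "UNIV :: 's set" l] by simp
  ultimately have "finite S" by simp
  moreover have "Re (tr_prod d l (tensor_ch A (replicate l undefined) (x 0)) (D 0)) \<in> S"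
    using assms(1) unfolding S_def is_code_def by force
  then have "S \<noteq> {}" by blast
  ultimately have "Min ((\<lambda>t. c * t) ` S) = c * Min S"
    using mono_Min_commute[of "\<lambda>t. c * t" S] assms(2) by (simp add: mono_def mult_left_mono)
  moreover have "{Re (tr_prod d l (tensor_ch A ss (x i)) (\<lambda>a b. of_real c * D i a b)) | i ss. i < M \<and> length ss = l}
      = (\<lambda>t. c * t) ` S"
    unfolding S_def tr_prod_scale by auto
  ultimately show ?thesis unfolding min_succ_def S_def by simp
qed

lemma shrink_factors_exist: "\<exists>c :: nat \<Rightarrow> real. (\<forall>l. 0 \<le> c l \<and> c l < 1) \<and> c \<longlonglongrightarrow> 1"
proof (intro exI conjI allI)
  let ?c = "\<lambda>l. 1 - inverse (real (Suc (Suc l)))"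
  show "0 \<le> ?c l" "?c l < 1" for l by (simp_all add: field_simps)
  have "(\<lambda>l. inverse (real (Suc (Suc l)))) \<longlonglongrightarrow> 0"
    using LIMSEQ_Suc[OF LIMSEQ_inverse_real_of_nat] .
  then show "?c \<longlonglongrightarrow> 1"
    using tendsto_diff[OF tendsto_const, of _ 0 sequentially 1] by simp
qed

theorem lemma11:
  fixes d :: nat and A :: "'s::finite \<Rightarrow> 'x::finite \<Rightarrow> op" and R :: real
    and M :: "nat \<Rightarrow> nat" and x :: "nat \<Rightarrow> nat \<Rightarrow> 'x list" and D :: "nat \<Rightarrow> nat \<Rightarrow> op"
  assumes "is_AVcqC d A"
    and "0 < C_Ad d A"
    and "0 < R" and "ereal R < C_Ad d A"
    and "\<forall>l. is_code d l (M l) (x l) (D l)"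
    and "ereal R \<le> liminf (\<lambda>l. ereal (log 2 (real (M l)) / real l))"
    and "(\<lambda>l. min_succ d A l (M l) (x l) (D l)) \<longlonglongrightarrow> 1"
  shows "\<exists>D' :: nat \<Rightarrow> nat \<Rightarrow> op.
           (\<forall>l. is_code d l (M l) (x l) (D' l)) \<and>
           ereal R \<le> liminf (\<lambda>l. ereal (log 2 (real (M l)) / real l)) \<and>
           (\<lambda>l. min_succ d A l (M l) (x l) (D' l)) \<longlonglongrightarrow> 1 \<and>
           (\<forall>l i ss. i < M l \<and> length ss = l \<longrightarrow>
              Re (tr_prod d l (tensor_ch A ss (x l i)) (D' l i)) < 1)"
proof -
  obtain c :: "nat \<Rightarrow> real" where c: "\<And>l. 0 \<le> c l" "\<And>l. c l < 1" and c_lim: "c \<longlonglongrightarrow> 1"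
    using shrink_factors_exist by blast
  define D' where "D' = (\<lambda>l i a b. of_real (c l) * D l i a b)"
  have code: "is_code d l (M l) (x l) (D' l)" for l
    unfolding D'_def using is_code_scale assms(5) c less_imp_le by blast
  have "(\<lambda>l. c l * min_succ d A l (M l) (x l) (D l)) \<longlonglongrightarrow> 1"
    using tendsto_mult[OF c_lim assms(7)] by simp
  then have lim: "(\<lambda>l. min_succ d A l (M l) (x l) (D' l)) \<longlonglongrightarrow> 1"
    unfolding D'_def min_succ_scale[OF assms(5)[rule_format] c(1)] .
  have "Re (tr_prod d l (tensor_ch A ss (x l i)) (D' l i)) < 1"
    if "i < M l" "length ss = l" for l i ss
  proof -
    have "Re (tr_prod d l (tensor_ch A ss (x l i)) (D' l i))
        = c l * Re (tr_prod d l (tensor_ch A ss (x l i)) (D l i))"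
      unfolding D'_def tr_prod_scale by simp
    also have "\<dots> \<le> c l"
      using mult_left_mono[OF code_success_le_1[OF assms(1) assms(5)[rule_format] that] c(1)] by simp
    also have "\<dots> < 1" by (rule c(2))
    finally show ?thesis .
  qed
  then show ?thesis using code lim assms(6) by blast
qed

end
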